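(* Let $k$ be a field of characteristic zero, $A_1=k[t,\partial]$ the first Weyl algebra, $R=k[t]$, let $V$ be a primary decomposable subspace of $R$, let $p\in k[t]$ and $\sigma:=\exp(\mathrm{ad}(p))$. Then $\sigma(\mathcal{D}(R,V))=\mathcal{D}(R,V)$ if and only if $p\in S(V)$.
   Context: $A_1$ is the $k$-algebra generated by $t,\partial$ with $\partial t-t\partial=1$. Elements of $k(t)[\partial]$ act as $k$-linear endomorphisms of $k(t)$ (with $\partial$ acting as the derivative). For $k$-subspaces $V,W\subseteq k(t)$, $\mathcal{D}(V,W):=\{d\in k(t)[\partial]: d(V)\subseteq W\}$. For $b\in R$, $\mathcal{O}(b):=\{a\in R: a'\in bR\}$ ($a'$ the formal derivative), and for a subspace $V\subseteq R$, $S(V):=\{a\in R: aV\subseteq V\}$. A non-zero $k$-subspace $V$ of $R$ is primary decomposable if $S(V)$ contains $\mathcal{O}(b)$ for some $b\neq 0$. For $p\in R$, $\exp(\mathrm{ad}(p))$ is the automorphism of $A_1$ given by $d\mapsto d+[d,p]+\frac{1}{2!}[[d,p],p]+\frac{1}{3!}[[[d,p],p],p]+\cdots$, where $[d,p]=dp-pd$ (a finite sum since $d\mapsto[d,p]$ is locally nilpotent). *)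

theory Defs
  imports "HOL-Computational_Algebra.Polynomial" "HOL-Computational_Algebra.Fraction_Field"
begin

(* R = k[t] is  'k poly ;  k(t) is  'k poly fract ;  R embeds into k(t) via p |-> Fract p 1. *)

definition emb :: "'k::field poly \<Rightarrow> 'k poly fract" where
  "emb p = Fract p 1"

(* derivative on k(t):  (a/b)' = (a' b - a b') / b^2  (independent of the representative a/b) *)
definition fderiv :: "'k::field_char_0 poly fract \<Rightarrow> 'k poly fract" where
  "fderiv x = (SOME y. \<exists>a b. b \<noteq> 0 \<and> x = Fract a b \<and> y = Fract (pderiv a * b - a * pderiv b) (b * b))"

(* an element of k(t)[\<partial>] is  \<Sum> d i * \<partial>^i , i.e. a finitely supported coefficient function *)
type_synonym 'k diffop = "nat \<Rightarrow> 'k poly fract"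

definition is_diffop :: "'k::field diffop \<Rightarrow> bool" where
  "is_diffop d \<longleftrightarrow> finite {i. d i \<noteq> 0}"

definition op_apply :: "'k::field_char_0 diffop \<Rightarrow> 'k poly fract \<Rightarrow> 'k poly fract" where
  "op_apply d f = (\<Sum>i\<in>{i. d i \<noteq> 0}. d i * (fderiv ^^ i) f)"

(* multiplication in k(t)[\<partial>]:  (a \<partial>^i)(b \<partial>^j) = \<Sum>_l (i choose l) a b^(l) \<partial>^(i+j-l) *)
definition op_mul :: "'k::field_char_0 diffop \<Rightarrow> 'k diffop \<Rightarrow> 'k diffop" where
  "op_mul d e = (\<lambda>n. \<Sum>i\<in>{i. d i \<noteq> 0}. \<Sum>j\<in>{j. e j \<noteq> 0}. \<Sum>l\<in>{..i}.
      if i + j - l = n then of_nat (i choose l) * d i * (fderiv ^^ l) (e j) else 0)"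

definition op_const :: "'k::field poly fract \<Rightarrow> 'k diffop" where
  "op_const c = (\<lambda>n. if n = 0 then c else 0)"

definition op_ad :: "'k::field_char_0 poly \<Rightarrow> 'k diffop \<Rightarrow> 'k diffop" where
  "op_ad p d = (\<lambda>n. op_mul d (op_const (emb p)) n - op_mul (op_const (emb p)) d n)"

definition exp_ad :: "'k::field_char_0 poly \<Rightarrow> 'k diffop \<Rightarrow> 'k diffop" where
  "exp_ad p d = (\<lambda>n. \<Sum>m\<in>{m. (op_ad p ^^ m) d \<noteq> (\<lambda>_. 0)}. inverse (of_nat (fact m)) * ((op_ad p ^^ m) d) n)"

definition Dop :: "'k::field_char_0 poly fract set \<Rightarrow> 'k poly fract set \<Rightarrow> 'k diffop set" where
  "Dop V W = {d. is_diffop d \<and> (\<forall>f\<in>V. op_apply d f \<in> W)}"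

definition Oset :: "'k::field poly \<Rightarrow> 'k poly set" where
  "Oset b = {a. b dvd pderiv a}"

definition Sset :: "'k::field poly set \<Rightarrow> 'k poly set" where
  "Sset V = {a. \<forall>v\<in>V. a * v \<in> V}"

definition k_subspace :: "'k::field poly set \<Rightarrow> bool" where
  "k_subspace V \<longleftrightarrow> 0 \<in> V \<and> (\<forall>x\<in>V. \<forall>y\<in>V. x + y \<in> V) \<and> (\<forall>c x. x \<in> V \<longrightarrow> smult c x \<in> V)"

definition primary_decomposable :: "'k::field poly set \<Rightarrow> bool" where
  "primary_decomposable V \<longleftrightarrow> k_subspace V \<and> V \<noteq> {0} \<and> (\<exists>b. b \<noteq> 0 \<and> Oset b \<subseteq> Sset V)"

end

theory Submission
  imports Defs
begin

(*
  Acting on R = k[t], an operator d of k(t)[\<partial>] becomes a map poly_act d : R -> k(t); this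
  representation is faithful (test d on the monomials t^i), and ad(p) becomes the map
  X |-> (r |-> X (p r) - p X r).  Since ad(p) lowers the order, sigma acts as the finite sum
  sum_s ad(p)^s / s!, and sigma^n as sum_s n^s ad(p)^s / s!.

  If p is in S(V), each ad(p)^s keeps the maps R -> V inside V, so sigma maps D(R,V) into itself,
  and so does sum_s (-1)^s ad(p)^s / s!, an inverse of sigma.  Conversely, if sigma maps D(R,V)
  into itself, then for d in D(R,V) the element sigma^n(d)(r) of V is a polynomial in n whose
  coefficients are ad(p)^s(d)(r) / s!; by finite differences they all lie in V, so [d,p] is in
  D(R,V).  For N = deg b take d = v sum_{i<=N} (-1)^i b^(N-i) \<partial>^i: integrating by parts N times
  shows that d(r)' is divisible by b, so d(R) is contained in v O(b), a subset of V; and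
  [d,p](1) = d(p) - N! lc(b) p v then puts p v into V.
*)

instance fract :: ("{idom, ring_char_0}") field_char_0
  by standard (simp add: inj_on_def of_nat_fract eq_fract)

lemma emb_0 [simp]: "emb 0 = 0"
  by (simp add: emb_def fract_collapse)

lemma emb_1 [simp]: "emb 1 = 1"
  by (simp add: emb_def fract_collapse)

lemma emb_add [simp]: "emb (a + b) = emb a + emb b"
  by (simp add: emb_def)

lemma emb_diff [simp]: "emb (a - b) = emb a - emb b"
  by (simp add: emb_def)

lemma emb_minus [simp]: "emb (- a) = - emb a"
  by (simp add: emb_def)

lemma emb_mult [simp]: "emb (a * b) = emb a * emb b"
  by (simp add: emb_def)

lemma emb_sum [simp]: "emb (sum f A) = (\<Sum>x\<in>A. emb (f x))"
  by (induction A rule: infinite_finite_induct) simp_all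

lemma emb_of_nat [simp]: "emb (of_nat n) = of_nat n"
  by (simp add: emb_def of_nat_fract)

lemma emb_eq_iff [simp]: "emb a = emb b \<longleftrightarrow> a = b"
  by (simp add: emb_def eq_fract)

lemma emb_eq_0_iff [simp]: "emb a = 0 \<longleftrightarrow> a = 0"
  using emb_eq_iff[of a 0] by simp

lemma inj_emb: "inj emb"
  by (rule injI) simp

lemma emb_of_int [simp]: "emb (of_int z) = of_int z"
  by (cases z rule: int_cases) simp_all

lemma of_rat_eq_emb: "(of_rat q :: 'k::field_char_0 poly fract) = emb [:of_rat q:]"
proof (cases q)
  case (Fract a b)
  have "of_int a = emb [:of_rat q:] * of_int b"
    using Fract by (simp add: of_rat_rat of_int_poly flip: emb_mult emb_of_int)
  then show ?thesis
    using Fract by (simp add: of_rat_rat field_simps)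
qed

lemma fderiv_emb [simp]: "fderiv (emb r) = emb (pderiv r)"
  unfolding fderiv_def
proof (rule some_equality)
  show "\<exists>a b. b \<noteq> 0 \<and> emb r = Fract a b \<and>
      emb (pderiv r) = Fract (pderiv a * b - a * pderiv b) (b * b)"
    by (rule exI[of _ r], rule exI[of _ 1]) (simp add: emb_def)
next
  fix y
  assume "\<exists>a b. b \<noteq> 0 \<and> emb r = Fract a b \<and> y = Fract (pderiv a * b - a * pderiv b) (b * b)"
  then obtain a b where b: "b \<noteq> 0" and "emb r = Fract a b"
    and y: "y = Fract (pderiv a * b - a * pderiv b) (b * b)" by blast
  then have "a = r * b" by (simp add: emb_def eq_fract)
  then have "pderiv a * b - a * pderiv b = pderiv r * (b * b)"
    by (simp add: pderiv_mult algebra_simps)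
  then show "y = emb (pderiv r)" using b by (simp add: y emb_def eq_fract)
qed

lemma higher_fderiv_emb [simp]: "(fderiv ^^ i) (emb r) = emb ((pderiv ^^ i) r)"
  by (induction i) simp_all

lemma higher_fderiv_0 [simp]: "(fderiv ^^ i) (0 :: 'k::field_char_0 poly fract) = 0"
  using higher_fderiv_emb[of i "0 :: 'k poly"] by simp

lemma higher_pderiv_mult:
  fixes p q :: "'a::{comm_semiring_1,semiring_no_zero_divisors} poly"
  shows "(pderiv ^^ n) (p * q) =
    (\<Sum>l\<le>n. of_nat (n choose l) * (pderiv ^^ l) p * (pderiv ^^ (n - l)) q)"
proof (induction n)
  case 0 then show ?case by simp
next
  case (Suc n)
  define f where "f l = (pderiv ^^ l) p" for l
  define g where "g l = (pderiv ^^ l) q" for l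
  have "(pderiv ^^ Suc n) (p * q) = (\<Sum>l\<le>n. pderiv (of_nat (n choose l) * f l * g (n - l)))"
    using Suc higher_pderiv_sum[of 1] by (simp add: f_def g_def)
  also have "\<dots> = (\<Sum>l\<le>n. of_nat (n choose l) * f (Suc l) * g (n - l))
       + (\<Sum>l\<le>n. of_nat (n choose l) * f l * g (Suc n - l))"
  proof -
    have "pderiv (of_nat (n choose l) * f l * g (n - l)) =
        of_nat (n choose l) * f (Suc l) * g (n - l) + of_nat (n choose l) * f l * g (Suc n - l)"
      if "l \<le> n" for l
      using that by (simp add: pderiv_mult f_def g_def Suc_diff_le algebra_simps)
    then show ?thesis by (simp flip: sum.distrib)
  qed
  also have "(\<Sum>l\<le>n. of_nat (n choose l) * f l * g (Suc n - l)) =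
      (\<Sum>l\<le>Suc n. of_nat (n choose l) * f l * g (Suc n - l))"
    by (simp add: binomial_eq_0)
  also have "\<dots> = f 0 * g (Suc n) + (\<Sum>l\<le>n. of_nat (n choose Suc l) * f (Suc l) * g (n - l))"
    by (subst sum.atMost_Suc_shift) simp
  also have "(\<Sum>l\<le>n. of_nat (n choose l) * f (Suc l) * g (n - l)) + \<dots> =
      (\<Sum>l\<le>Suc n. of_nat (Suc n choose l) * f l * g (Suc n - l))"
    by (subst sum.atMost_Suc_shift) (simp add: sum.distrib algebra_simps)
  finally show ?case by (simp add: f_def g_def)
qed

lemma higher_pderiv_eq_0:
  fixes g :: "'a::{comm_semiring_1,semiring_no_zero_divisors} poly"
  shows "degree g < m \<Longrightarrow> (pderiv ^^ m) g = 0"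
  by (rule poly_eqI) (simp add: coeff_higher_pderiv coeff_eq_0)

lemma higher_pderiv_degree:
  fixes g :: "'a::{comm_semiring_1,semiring_no_zero_divisors,semiring_char_0} poly"
  shows "(pderiv ^^ degree g) g = [:fact (degree g) * lead_coeff g:]"
  by (rule poly_eqI)
    (auto simp: coeff_higher_pderiv coeff_pCons pochhammer_fact[symmetric] coeff_eq_0
      split: nat.split)

definition ord_less :: "(nat \<Rightarrow> 'a::zero) \<Rightarrow> nat \<Rightarrow> bool" where
  "ord_less d K \<longleftrightarrow> (\<forall>i\<ge>K. d i = 0)"

lemma ord_less_mono: "ord_less d K \<Longrightarrow> K \<le> K' \<Longrightarrow> ord_less d K'"
  unfolding ord_less_def by auto

lemma ord_less_0_iff: "ord_less d 0 \<longleftrightarrow> d = (\<lambda>_. 0)"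
  by (auto simp: ord_less_def)

lemma ord_less_imp_is_diffop: "ord_less d K \<Longrightarrow> is_diffop d"
  unfolding ord_less_def is_diffop_def
  by (rule finite_subset[of _ "{..<K}"]) (auto simp: not_less[symmetric])

lemma is_diffop_imp_ord_less:
  assumes "is_diffop d"
  obtains K where "ord_less d K"
proof -
  from assms obtain K where "\<forall>i\<in>{i. d i \<noteq> 0}. i < K"
    unfolding is_diffop_def using finite_nat_set_iff_bounded by blast
  then show ?thesis using that unfolding ord_less_def by (meson leD mem_Collect_eq)
qed

lemma sum_support_eq_sum_lessThan:
  assumes "ord_less d K" "\<And>i. d i = 0 \<Longrightarrow> f i = 0"
  shows "(\<Sum>i\<in>{i. d i \<noteq> 0}. f i) = (\<Sum>i<K. f i)"
  by (rule sum.mono_neutral_left) (use assms in \<open>auto simp: ord_less_def not_less[symmetric]\<close>)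

definition poly_act :: "'k::field_char_0 diffop \<Rightarrow> 'k poly \<Rightarrow> 'k poly fract" where
  "poly_act d r = op_apply d (emb r)"

lemma poly_act_eq_sum:
  "ord_less d K \<Longrightarrow> poly_act d r = (\<Sum>i<K. d i * emb ((pderiv ^^ i) r))"
  unfolding poly_act_def op_apply_def by (simp add: sum_support_eq_sum_lessThan)

lemma poly_act_zero [simp]: "poly_act (\<lambda>_. 0) r = 0"
  using poly_act_eq_sum[of "\<lambda>_. 0" 0] by (simp add: ord_less_0_iff)

lemma Dop_range_emb_iff: "d \<in> Dop (range emb) W \<longleftrightarrow> is_diffop d \<and> (\<forall>r. poly_act d r \<in> W)"
  by (auto simp: Dop_def poly_act_def)

lemma op_mul_eq_sum:
  assumes "ord_less d K" "ord_less e J"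
  shows "op_mul d e n = (\<Sum>i<K. \<Sum>j<J. \<Sum>l\<le>i.
      if i + j - l = n then of_nat (i choose l) * d i * (fderiv ^^ l) (e j) else 0)"
proof -
  define F where "F i j = (\<Sum>l\<le>i.
      if i + j - l = n then of_nat (i choose l) * d i * (fderiv ^^ l) (e j) else 0)" for i j
  have "op_mul d e n = (\<Sum>i\<in>{i. d i \<noteq> 0}. \<Sum>j\<in>{j. e j \<noteq> 0}. F i j)"
    by (simp add: op_mul_def F_def)
  also have "\<dots> = (\<Sum>i\<in>{i. d i \<noteq> 0}. \<Sum>j<J. F i j)"
    by (rule sum.cong[OF refl], rule sum_support_eq_sum_lessThan[OF assms(2)])
      (simp add: F_def cong: if_cong)
  also have "\<dots> = (\<Sum>i<K. \<Sum>j<J. F i j)"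
    by (rule sum_support_eq_sum_lessThan[OF assms(1)]) (simp add: F_def cong: if_cong)
  finally show ?thesis by (simp add: F_def)
qed

lemma ord_less_op_const: "ord_less (op_const c) (Suc 0)"
  by (simp add: ord_less_def op_const_def)

lemma op_ad_eq_sum:
  assumes "ord_less d K"
  shows "op_ad p d n = (\<Sum>i<K. \<Sum>l\<le>i.
      if i - l = n then of_nat (i choose l) * d i * emb ((pderiv ^^ l) p) else 0) - emb p * d n"
proof -
  have "op_mul (op_const (emb p)) d n = (\<Sum>j<K. if j = n then emb p * d j else 0)"
    unfolding op_mul_eq_sum[OF ord_less_op_const assms]
    by (simp only: sum.lessThan_Suc lessThan_0 sum.empty add_0 atMost_0) (simp add: op_const_def)
  also have "\<dots> = emb p * d n"
    using assms by (auto simp: ord_less_def)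
  finally have left: "op_mul (op_const (emb p)) d n = emb p * d n" .
  have right: "op_mul d (op_const (emb p)) n = (\<Sum>i<K. \<Sum>l\<le>i.
      if i - l = n then of_nat (i choose l) * d i * emb ((pderiv ^^ l) p) else 0)"
    unfolding op_mul_eq_sum[OF assms ord_less_op_const] by (simp add: op_const_def cong: if_cong)
  show ?thesis
    by (simp add: op_ad_def left right)
qed

lemma ord_less_op_ad_Suc:
  assumes "ord_less d (Suc K)"
  shows "ord_less (op_ad p d) K"
  unfolding ord_less_def
proof (intro allI impI)
  fix n assume "K \<le> n"
  then have "i - l = n \<longleftrightarrow> i = n \<and> l = 0" if "i < Suc K" "l \<le> i" for i l
    using that by auto
  then have "(\<Sum>i<Suc K. \<Sum>l\<le>i.
        if i - l = n then of_nat (i choose l) * d i * emb ((pderiv ^^ l) p) else 0)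
      = (\<Sum>i<Suc K. if i = n then d i * emb p else 0)"
    by (intro sum.cong refl) (simp cong: if_cong)
  also have "\<dots> = d n * emb p"
    using assms by (simp add: ord_less_def)
  finally show "op_ad p d n = 0"
    using op_ad_eq_sum[OF assms, of p n] by simp
qed

lemma ord_less_op_ad: "ord_less d K \<Longrightarrow> ord_less (op_ad p d) K"
  by (rule ord_less_op_ad_Suc) (auto intro: ord_less_mono)

lemma ord_less_op_ad_pow: "ord_less d K \<Longrightarrow> ord_less ((op_ad p ^^ m) d) K"
  by (induction m) (simp_all add: ord_less_op_ad)

lemma ord_less_op_ad_pow_sub: "ord_less d (m + K) \<Longrightarrow> ord_less ((op_ad p ^^ m) d) K"
proof (induction m arbitrary: K)
  case (Suc m)
  then have "ord_less ((op_ad p ^^ m) d) (Suc K)" by simp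
  then show ?case by (simp add: ord_less_op_ad_Suc)
qed simp

lemma op_ad_pow_eq_0:
  assumes "ord_less d K" "K \<le> m"
  shows "(op_ad p ^^ m) d = (\<lambda>_. 0)"
proof -
  have "ord_less ((op_ad p ^^ m) d) 0"
    using assms ord_less_op_ad_pow_sub[of d m 0] by (auto intro: ord_less_mono)
  then show ?thesis by (simp add: ord_less_0_iff)
qed

definition ad_map ::
    "'k::field_char_0 poly \<Rightarrow> ('k poly \<Rightarrow> 'k poly fract) \<Rightarrow> 'k poly \<Rightarrow> 'k poly fract" where
  "ad_map p X r = X (p * r) - emb p * X r"

lemma poly_act_op_ad:
  assumes "ord_less d K"
  shows "poly_act (op_ad p d) = ad_map p (poly_act d)"
proof
  fix r
  define c where "c i l = of_nat (i choose l) * d i * emb ((pderiv ^^ l) p)" for i l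
  have "poly_act (op_ad p d) r = (\<Sum>n<K. op_ad p d n * emb ((pderiv ^^ n) r))"
    by (rule poly_act_eq_sum[OF ord_less_op_ad[OF assms]])
  also have "\<dots> = (\<Sum>n<K. \<Sum>i<K. \<Sum>l\<le>i. if i - l = n then c i l * emb ((pderiv ^^ n) r) else 0)
      - (\<Sum>n<K. emb p * (d n * emb ((pderiv ^^ n) r)))"
    by (simp add: op_ad_eq_sum[OF assms] c_def left_diff_distrib sum_subtractf sum_distrib_right
        mult.assoc if_distrib if_distribR cong: if_cong)
  also have "(\<Sum>n<K. \<Sum>i<K. \<Sum>l\<le>i. if i - l = n then c i l * emb ((pderiv ^^ n) r) else 0)
      = (\<Sum>i<K. \<Sum>l\<le>i. c i l * emb ((pderiv ^^ (i - l)) r))"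
  proof -
    have "(\<Sum>n<K. \<Sum>i<K. \<Sum>l\<le>i. if i - l = n then c i l * emb ((pderiv ^^ n) r) else 0)
        = (\<Sum>i<K. \<Sum>l\<le>i. \<Sum>n<K. if i - l = n then c i l * emb ((pderiv ^^ n) r) else 0)"
      by (subst sum.swap) (rule sum.cong[OF refl], rule sum.swap)
    also have "\<dots> = (\<Sum>i<K. \<Sum>l\<le>i. c i l * emb ((pderiv ^^ (i - l)) r))"
      by (intro sum.cong refl) auto
    finally show ?thesis .
  qed
  also have "\<dots> = (\<Sum>i<K. d i * emb ((pderiv ^^ i) (p * r)))"
    by (simp add: c_def higher_pderiv_mult sum_distrib_left algebra_simps)
  finally show "poly_act (op_ad p d) r = ad_map p (poly_act d) r"
    by (simp add: ad_map_def poly_act_eq_sum[OF assms] sum_distrib_left)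
qed

lemma poly_act_op_ad_pow:
  assumes "ord_less d K"
  shows "poly_act ((op_ad p ^^ m) d) = (ad_map p ^^ m) (poly_act d)"
proof (induction m)
  case (Suc m)
  have "ord_less ((op_ad p ^^ m) d) K"
    using assms by (rule ord_less_op_ad_pow)
  then show ?case using Suc by (simp add: poly_act_op_ad)
qed simp

lemma ad_map_pow_eq_0:
  assumes "ord_less d K" "K \<le> m"
  shows "(ad_map p ^^ m) (poly_act d) = (\<lambda>_. 0)"
  using poly_act_op_ad_pow[OF assms(1), where p=p and m=m]
  by (simp add: op_ad_pow_eq_0[OF assms] fun_eq_iff)

lemma exp_ad_eq_sum:
  assumes "ord_less d K"
  shows "exp_ad p d = (\<lambda>n. \<Sum>m<K. inverse (fact m) * (op_ad p ^^ m) d n)"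
proof
  fix n
  have "{m. (op_ad p ^^ m) d \<noteq> (\<lambda>_. 0)} \<subseteq> {..<K}"
    using op_ad_pow_eq_0[OF assms] by (auto simp: not_less[symmetric])
  then show "exp_ad p d n = (\<Sum>m<K. inverse (fact m) * (op_ad p ^^ m) d n)"
    unfolding exp_ad_def of_nat_fact by (intro sum.mono_neutral_left) auto
qed

lemma ord_less_lincomb:
  fixes e :: "'b \<Rightarrow> nat \<Rightarrow> 'a::semiring_0"
  shows "(\<And>m. m \<in> A \<Longrightarrow> ord_less (e m) K) \<Longrightarrow> ord_less (\<lambda>n. \<Sum>m\<in>A. c m * e m n) K"
  by (simp add: ord_less_def)

lemma ord_less_exp_ad: "ord_less d K \<Longrightarrow> ord_less (exp_ad p d) K"
  by (simp add: exp_ad_eq_sum ord_less_lincomb ord_less_op_ad_pow)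

lemma poly_act_lincomb:
  assumes "\<And>m. m \<in> A \<Longrightarrow> ord_less (e m) K"
  shows "poly_act (\<lambda>n. \<Sum>m\<in>A. c m * e m n) r = (\<Sum>m\<in>A. c m * poly_act (e m) r)"
  using assms
  by (simp add: poly_act_eq_sum[OF ord_less_lincomb[OF assms]] poly_act_eq_sum[of _ K]
      sum_distrib_right sum_distrib_left mult.assoc sum.swap[of _ "{..<K}"])

definition exp_ad_map ::
    "nat \<Rightarrow> 'k poly fract \<Rightarrow> 'k::field_char_0 poly \<Rightarrow>
      ('k poly \<Rightarrow> 'k poly fract) \<Rightarrow> 'k poly \<Rightarrow> 'k poly fract" where
  "exp_ad_map K x p X r = (\<Sum>s<K. x ^ s / fact s * (ad_map p ^^ s) X r)"

lemma poly_act_exp_ad: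
  assumes "ord_less d K"
  shows "poly_act (exp_ad p d) = exp_ad_map K 1 p (poly_act d)"
proof
  fix r
  show "poly_act (exp_ad p d) r = exp_ad_map K 1 p (poly_act d) r"
    unfolding exp_ad_eq_sum[OF assms] exp_ad_map_def
    by (subst poly_act_lincomb[of _ _ K])
      (simp_all add: ord_less_op_ad_pow[OF assms] poly_act_op_ad_pow[OF assms] divide_inverse)
qed

lemma ad_map_pow_lincomb:
  "(ad_map p ^^ s) (\<lambda>r. \<Sum>m\<in>A. c m * (ad_map p ^^ m) X r) =
    (\<lambda>r. \<Sum>m\<in>A. c m * (ad_map p ^^ (s + m)) X r)"
proof (induction s)
  case (Suc s)
  then show ?case
    by (simp add: ad_map_def fun_eq_iff sum_distrib_left sum_subtractf algebra_simps)
qed simp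

lemma sum_square_eq_sum_diagonals:
  fixes f :: "nat \<Rightarrow> nat \<Rightarrow> 'a::comm_semiring_1"
  assumes "\<And>u. K \<le> u \<Longrightarrow> G u = 0"
  shows "(\<Sum>m<K. \<Sum>s<K. f m s * G (m + s)) = (\<Sum>u<K. (\<Sum>m\<le>u. f m (u - m)) * G u)"
proof -
  have "(\<Sum>m<K. \<Sum>s<K. f m s * G (m + s)) = (\<Sum>(m, s)\<in>{..<K} \<times> {..<K}. f m s * G (m + s))"
    by (simp add: sum.cartesian_product)
  also have "\<dots> = (\<Sum>(m, s)\<in>{(m, s). m + s < K}. f m s * G (m + s))"
    by (rule sum.mono_neutral_right) (use assms in \<open>auto, metis mult_zero_right not_less\<close>)
  also have "\<dots> = (\<Sum>u<K. \<Sum>m\<le>u. f m (u - m) * G (m + (u - m)))"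
    by (rule sum.triangle_reindex)
  finally show ?thesis
    by (simp add: sum_distrib_right)
qed

lemma sum_inverse_fact_power_div_fact:
  fixes x :: "'a::field_char_0"
  shows "(\<Sum>m\<le>u. inverse (fact m) * (x ^ (u - m) / fact (u - m))) = (x + 1) ^ u / fact u"
proof -
  have "(x + 1) ^ u = (\<Sum>m\<le>u. of_nat (u choose m) * 1 ^ m * x ^ (u - m))"
    using binomial_ring[of 1 x u] by (simp add: add.commute)
  also have "\<dots> = fact u * (\<Sum>m\<le>u. inverse (fact m) * (x ^ (u - m) / fact (u - m)))"
    by (simp add: sum_distrib_left binomial_fact field_simps)
  finally show ?thesis by simp
qed

lemma exp_ad_map_exp_ad_map:
  assumes "\<And>u. K \<le> u \<Longrightarrow> (ad_map p ^^ u) X = (\<lambda>_. 0)"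
  shows "exp_ad_map K 1 p (exp_ad_map K x p X) = exp_ad_map K (x + 1) p X"
proof
  fix r
  have "exp_ad_map K 1 p (exp_ad_map K x p X) r =
      (\<Sum>m<K. \<Sum>s<K. (inverse (fact m) * (x ^ s / fact s)) * (ad_map p ^^ (m + s)) X r)"
    unfolding exp_ad_map_def[abs_def] ad_map_pow_lincomb
    by (simp add: sum_distrib_left divide_inverse mult.assoc)
  also have "\<dots> = (\<Sum>u<K. (\<Sum>m\<le>u. inverse (fact m) * (x ^ (u - m) / fact (u - m))) *
      (ad_map p ^^ u) X r)"
    by (rule sum_square_eq_sum_diagonals) (simp add: assms)
  also have "\<dots> = exp_ad_map K (x + 1) p X r"
    by (simp only: exp_ad_map_def sum_inverse_fact_power_div_fact)
  finally show "exp_ad_map K 1 p (exp_ad_map K x p X) r = exp_ad_map K (x + 1) p X r" .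
qed

lemma exp_ad_map_0: "0 < K \<Longrightarrow> exp_ad_map K 0 p X = X"
  by (auto simp: exp_ad_map_def fun_eq_iff power_0_left lessThan_Suc_eq_insert_0 gr0_conv_Suc
      sum.reindex)

lemma ord_less_exp_ad_pow: "ord_less d K \<Longrightarrow> ord_less ((exp_ad p ^^ n) d) K"
  by (induction n) (simp_all add: ord_less_exp_ad)

lemma poly_act_exp_ad_pow:
  assumes "ord_less d K" "0 < K"
  shows "poly_act ((exp_ad p ^^ n) d) = exp_ad_map K (of_nat n) p (poly_act d)"
proof (induction n)
  case 0
  then show ?case by (simp add: exp_ad_map_0[OF assms(2)])
next
  case (Suc n)
  have "poly_act ((exp_ad p ^^ Suc n) d) =
      exp_ad_map K 1 p (exp_ad_map K (of_nat n) p (poly_act d))"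
    using poly_act_exp_ad[OF ord_less_exp_ad_pow[OF assms(1)], of p n] Suc by simp
  also have "\<dots> = exp_ad_map K (of_nat (Suc n)) p (poly_act d)"
    using exp_ad_map_exp_ad_map[of K p "poly_act d" "of_nat n", OF ad_map_pow_eq_0[OF assms(1)]]
    by (simp add: add.commute)
  finally show ?case .
qed

lemma poly_act_eq_0_imp:
  fixes d :: "'k::field_char_0 diffop"
  assumes "ord_less d K" "\<And>r. poly_act d r = 0"
  shows "d = (\<lambda>_. 0)"
proof (rule ccontr)
  assume "d \<noteq> (\<lambda>_. 0)"
  then obtain i0 where i0: "d i0 \<noteq> 0" "\<And>i. i < i0 \<Longrightarrow> d i = 0"
    using exists_least_iff[of "\<lambda>i. d i \<noteq> 0"] by auto
  have "i0 < K" using assms(1) i0(1) by (auto simp: ord_less_def not_less[symmetric])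
  have "d i * emb ((pderiv ^^ i) (monom 1 i0)) =
      (if i = i0 then d i0 * emb [:fact i0:] else 0)" for i
    using i0(2)[of i] higher_pderiv_degree[of "monom (1::'k) i0"]
    by (cases i i0 rule: linorder_cases) (simp_all add: higher_pderiv_eq_0 degree_monom_eq)
  then have "poly_act d (monom 1 i0) = d i0 * emb [:fact i0:]"
    using \<open>i0 < K\<close> by (simp add: poly_act_eq_sum[OF assms(1)])
  then show False using assms(2) i0(1) by simp
qed

lemma poly_act_inject:
  assumes "is_diffop d" "is_diffop e" "\<And>r. poly_act d r = poly_act e r"
  shows "d = e"
proof -
  obtain K1 K2 where "ord_less d K1" "ord_less e K2"
    using assms(1,2) by (meson is_diffop_imp_ord_less)
  then have d: "ord_less d (max K1 K2)" and e: "ord_less e (max K1 K2)"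
    by (auto intro: ord_less_mono)
  then have de: "ord_less (\<lambda>n. d n - e n) (max K1 K2)"
    by (simp add: ord_less_def)
  have "poly_act (\<lambda>n. d n - e n) r = poly_act d r - poly_act e r" for r
    by (simp add: poly_act_eq_sum[OF de] poly_act_eq_sum[OF d] poly_act_eq_sum[OF e]
        left_diff_distrib sum_subtractf)
  then have "(\<lambda>n. d n - e n) = (\<lambda>_. 0)"
    by (intro poly_act_eq_0_imp[OF de]) (simp add: assms(3))
  then show ?thesis by (simp add: fun_eq_iff)
qed

definition rat_subspace :: "'a::field_char_0 set \<Rightarrow> bool" where
  "rat_subspace W \<longleftrightarrow> 0 \<in> W \<and> (\<forall>x\<in>W. \<forall>y\<in>W. x + y \<in> W) \<and> (\<forall>c\<in>\<rat>. \<forall>x\<in>W. c * x \<in> W)"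

lemma rat_subspace_add: "rat_subspace W \<Longrightarrow> x \<in> W \<Longrightarrow> y \<in> W \<Longrightarrow> x + y \<in> W"
  by (simp add: rat_subspace_def)

lemma rat_subspace_scale: "rat_subspace W \<Longrightarrow> c \<in> \<rat> \<Longrightarrow> x \<in> W \<Longrightarrow> c * x \<in> W"
  by (simp add: rat_subspace_def)

lemma rat_subspace_diff: "rat_subspace W \<Longrightarrow> x \<in> W \<Longrightarrow> y \<in> W \<Longrightarrow> x - y \<in> W"
  using rat_subspace_add[of W x "(- 1) * y"] rat_subspace_scale[of W "- 1" y] by simp

lemma rat_subspace_lincomb:
  assumes "rat_subspace W" "\<And>m. m \<in> A \<Longrightarrow> c m \<in> \<rat>" "\<And>m. m \<in> A \<Longrightarrow> X m \<in> W"
  shows "(\<Sum>m\<in>A. c m * X m) \<in> W"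
  using assms(2,3)
  by (induction A rule: infinite_finite_induct)
    (use assms(1) in \<open>auto simp: rat_subspace_def\<close>)

lemma k_subspace_diff:
  "k_subspace V \<Longrightarrow> x \<in> V \<Longrightarrow> y \<in> V \<Longrightarrow> x - y \<in> V"
  unfolding k_subspace_def by (metis diff_conv_add_uminus smult_1_left smult_minus_left)

lemma k_subspace_imp_rat_subspace:
  fixes V :: "'k::field_char_0 poly set"
  assumes "k_subspace V"
  shows "rat_subspace (emb ` V)"
  unfolding rat_subspace_def
proof (intro conjI ballI)
  show "0 \<in> emb ` V"
    using assms by (force simp: k_subspace_def)
  show "x + y \<in> emb ` V" if "x \<in> emb ` V" "y \<in> emb ` V" for x y
    using that assms by (auto simp: k_subspace_def simp flip: emb_add)
  show "c * x \<in> emb ` V" if "c \<in> \<rat>" "x \<in> emb ` V" for c x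
  proof -
    from that obtain q v where "c = of_rat q" "x = emb v" "v \<in> V"
      by (auto elim: Rats_cases)
    moreover have "emb [:of_rat q:] * emb v = emb (smult (of_rat q) v)"
      by (simp flip: emb_mult)
    ultimately show ?thesis
      using assms by (auto simp: k_subspace_def of_rat_eq_emb)
  qed
qed

lemma power_sum_forward_difference:
  fixes a :: "nat \<Rightarrow> 'a::comm_ring_1"
  shows "(\<Sum>t\<le>K. (x + 1) ^ t * a t) - (\<Sum>t\<le>K. x ^ t * a t) =
    (\<Sum>r<K. x ^ r * (\<Sum>t=Suc r..K. of_nat (t choose r) * a t))"
proof -
  have "(x + 1) ^ t - x ^ t = (\<Sum>r<t. of_nat (t choose r) * x ^ r)" for t
    using binomial_ring[of x 1 t] by (simp add: lessThan_Suc_atMost[symmetric])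
  then have "(\<Sum>t\<le>K. (x + 1) ^ t * a t) - (\<Sum>t\<le>K. x ^ t * a t) =
      (\<Sum>t\<le>K. \<Sum>r<t. x ^ r * (of_nat (t choose r) * a t))"
    by (simp add: sum_subtractf[symmetric] left_diff_distrib[symmetric] sum_distrib_left
        algebra_simps)
  also have "\<dots> = (\<Sum>r<K. x ^ r * (\<Sum>t=Suc r..K. of_nat (t choose r) * a t))"
    by (simp add: sum.nested_swap' sum_distrib_left)
  finally show ?thesis .
qed

lemma rat_subspace_coeff_mem:
  fixes a :: "nat \<Rightarrow> 'a::field_char_0"
  assumes W: "rat_subspace W" and "\<And>n::nat. (\<Sum>s\<le>K. of_nat n ^ s * a s) \<in> W" and "s \<le> K"
  shows "a s \<in> W"
  using assms(2,3)
proof (induction K arbitrary: a s)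
  case 0
  then show ?case using "0.prems"(1)[of 0] by simp
next
  case (Suc K)
  define b where "b r = (\<Sum>t=Suc r..Suc K. of_nat (t choose r) * a t)" for r
  have "(\<Sum>r\<le>K. of_nat n ^ r * b r) \<in> W" for n :: nat
  proof -
    have "(\<Sum>r\<le>K. of_nat n ^ r * b r) =
        (\<Sum>t\<le>Suc K. of_nat (Suc n) ^ t * a t) - (\<Sum>t\<le>Suc K. of_nat n ^ t * a t)"
      using power_sum_forward_difference[where x="of_nat n" and K="Suc K" and a=a]
      by (simp add: b_def lessThan_Suc_atMost add.commute)
    then show ?thesis
      using rat_subspace_diff[OF W Suc.prems(1)[of "Suc n"] Suc.prems(1)[of n]] by simp
  qed
  then have "b K \<in> W" using Suc.IH by blast
  then have top: "a (Suc K) \<in> W"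
    using rat_subspace_scale[OF W, of "inverse (of_nat (Suc K))" "b K"]
    by (simp add: b_def mult.assoc[symmetric] del: of_nat_Suc)
  have "(\<Sum>s\<le>K. of_nat n ^ s * a s) \<in> W" for n :: nat
    using rat_subspace_diff[OF W Suc.prems(1)[of n]
        rat_subspace_scale[OF W _ top, of "of_nat n ^ Suc K"]]
    by simp
  then show ?case
    using Suc.IH Suc.prems(2) top by (cases "s = Suc K") auto
qed

(* repeated integration by parts, see pderiv_ibp_sum *)
definition ibp_sum :: "'a::idom poly \<Rightarrow> nat \<Rightarrow> 'a poly \<Rightarrow> 'a poly" where
  "ibp_sum g M r = (\<Sum>i\<le>M. smult ((- 1) ^ i) ((pderiv ^^ (M - i)) g * (pderiv ^^ i) r))"

lemma pderiv_ibp_sum: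
  "pderiv (ibp_sum g M r) = (pderiv ^^ Suc M) g * r + smult ((- 1) ^ M) (g * (pderiv ^^ Suc M) r)"
proof (induction M arbitrary: g)
  case 0
  then show ?case by (simp add: ibp_sum_def pderiv_mult algebra_simps)
next
  case (Suc M)
  have "(\<Sum>i\<le>M. smult ((- 1) ^ i) ((pderiv ^^ (Suc M - i)) g * (pderiv ^^ i) r)) =
      ibp_sum (pderiv g) M r"
    unfolding ibp_sum_def
    by (rule sum.cong[OF refl]) (simp add: Suc_diff_le funpow_Suc_right del: funpow.simps)
  then have "ibp_sum g (Suc M) r =
      ibp_sum (pderiv g) M r + smult ((- 1) ^ Suc M) (g * (pderiv ^^ Suc M) r)"
    by (simp add: ibp_sum_def del: funpow.simps)
  then have "pderiv (ibp_sum g (Suc M) r) =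
      pderiv (ibp_sum (pderiv g) M r) + smult ((- 1) ^ Suc M) (pderiv (g * (pderiv ^^ Suc M) r))"
    by (simp add: pderiv_add pderiv_diff pderiv_smult del: funpow.simps)
  also have "\<dots> =
      (pderiv ^^ Suc (Suc M)) g * r + smult ((- 1) ^ Suc M) (g * (pderiv ^^ Suc (Suc M)) r)"
    unfolding Suc.IH
    by (simp add: pderiv_mult funpow_Suc_right funpow_swap1 del: funpow.simps)
      (simp add: algebra_simps smult_add_right)
  finally show ?case .
qed

lemma ibp_sum_1: "ibp_sum g M 1 = (pderiv ^^ M) g"
proof -
  have "(pderiv ^^ i) (1 :: 'a poly) = 0" if "0 < i" for i
    using that by (simp add: higher_pderiv_eq_0)
  then have "ibp_sum g M 1 = (\<Sum>i\<le>M. if i = 0 then (pderiv ^^ M) g else 0)"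
    unfolding ibp_sum_def by (intro sum.cong refl) auto
  then show ?thesis by simp
qed

lemma ibp_sum_in_Oset: "ibp_sum g (degree g) r \<in> Oset g"
  unfolding Oset_def mem_Collect_eq pderiv_ibp_sum
  by (simp add: higher_pderiv_eq_0 dvd_smult del: funpow.simps)

definition ibp_op :: "'k::field_char_0 poly \<Rightarrow> 'k poly \<Rightarrow> 'k diffop" where
  "ibp_op v g = (\<lambda>i.
    if i \<le> degree g then emb (smult ((- 1) ^ i) (v * (pderiv ^^ (degree g - i)) g)) else 0)"

lemma ord_less_ibp_op: "ord_less (ibp_op v g) (Suc (degree g))"
  by (simp add: ord_less_def ibp_op_def)

lemma poly_act_ibp_op: "poly_act (ibp_op v g) r = emb (v * ibp_sum g (degree g) r)"
  unfolding poly_act_eq_sum[OF ord_less_ibp_op] lessThan_Suc_atMost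
  by (simp add: ibp_op_def ibp_sum_def sum_distrib_left ac_simps flip: emb_mult emb_sum)

lemma ad_map_pow_mem:
  assumes W: "rat_subspace W" and p: "\<And>x. x \<in> W \<Longrightarrow> emb p * x \<in> W" and X: "\<And>r. X r \<in> W"
  shows "(ad_map p ^^ m) X r \<in> W"
  by (induction m arbitrary: r) (simp_all add: X ad_map_def rat_subspace_diff[OF W] p)

lemma exp_ad_map_mem:
  assumes "rat_subspace W" "\<And>x. x \<in> W \<Longrightarrow> emb p * x \<in> W" "\<And>r. X r \<in> W" "x \<in> \<rat>"
  shows "exp_ad_map K x p X r \<in> W"
  unfolding exp_ad_map_def
proof (rule rat_subspace_lincomb)
  show "x ^ s / fact s \<in> \<rat>" for s
    using assms(4) Rats_of_nat[of "fact s"] by (intro Rats_divide Rats_power) simp_all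
qed (simp_all add: assms ad_map_pow_mem)

lemma exp_ad_mem_Dop:
  assumes W: "rat_subspace W" and p: "\<And>x. x \<in> W \<Longrightarrow> emb p * x \<in> W"
    and d: "d \<in> Dop (range emb) W"
  shows "exp_ad p d \<in> Dop (range emb) W"
proof -
  from d have "is_diffop d" by (simp add: Dop_range_emb_iff)
  then obtain K where K: "ord_less d K" by (rule is_diffop_imp_ord_less)
  have "poly_act (exp_ad p d) r \<in> W" for r
    unfolding poly_act_exp_ad[OF K]
    by (rule exp_ad_map_mem[OF W p]) (use d in \<open>simp_all add: Dop_range_emb_iff\<close>)
  then show ?thesis
    using ord_less_imp_is_diffop[OF ord_less_exp_ad[OF K]] by (simp add: Dop_range_emb_iff)
qed

lemma mem_exp_ad_image_Dop:
  assumes W: "rat_subspace W" and p: "\<And>x. x \<in> W \<Longrightarrow> emb p * x \<in> W"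
    and e: "e \<in> Dop (range emb) W"
  shows "e \<in> exp_ad p ` Dop (range emb) W"
proof -
  from e have "is_diffop e" by (simp add: Dop_range_emb_iff)
  then obtain K where "ord_less e K" by (rule is_diffop_imp_ord_less)
  then have K: "ord_less e (Suc K)" by (rule ord_less_mono) simp
  define d where "d n = (\<Sum>m<Suc K. (- 1) ^ m / fact m * (op_ad p ^^ m) e n)" for n
  have ord_d: "ord_less d (Suc K)"
    unfolding d_def by (intro ord_less_lincomb ord_less_op_ad_pow[OF K])
  have act_d: "poly_act d = exp_ad_map (Suc K) (- 1) p (poly_act e)"
  proof
    fix r
    show "poly_act d r = exp_ad_map (Suc K) (- 1) p (poly_act e) r"
      unfolding d_def exp_ad_map_def
      by (subst poly_act_lincomb[of _ _ "Suc K"])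
        (simp_all add: ord_less_op_ad_pow[OF K] poly_act_op_ad_pow[OF K])
  qed
  have "poly_act d r \<in> W" for r
    unfolding act_d
    by (rule exp_ad_map_mem[OF W p]) (use e in \<open>simp_all add: Dop_range_emb_iff\<close>)
  then have "d \<in> Dop (range emb) W"
    using ord_less_imp_is_diffop[OF ord_d] by (simp add: Dop_range_emb_iff)
  moreover have "exp_ad p d = e"
  proof (rule poly_act_inject)
    show "is_diffop (exp_ad p d)"
      by (rule ord_less_imp_is_diffop[OF ord_less_exp_ad[OF ord_d]])
    show "is_diffop e"
      by (rule ord_less_imp_is_diffop[OF K])
    have "poly_act (exp_ad p d) = exp_ad_map (Suc K) 0 p (poly_act e)"
      using exp_ad_map_exp_ad_map[OF ad_map_pow_eq_0[OF K]]
      by (simp add: poly_act_exp_ad[OF ord_d] act_d)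
    then show "poly_act (exp_ad p d) r = poly_act e r" for r
      by (simp add: exp_ad_map_0)
  qed
  ultimately show ?thesis by blast
qed

lemma exp_ad_image_Dop_eq:
  assumes "rat_subspace W" "\<And>x. x \<in> W \<Longrightarrow> emb p * x \<in> W"
  shows "exp_ad p ` Dop (range emb) W = Dop (range emb) W"
  using exp_ad_mem_Dop[OF assms] mem_exp_ad_image_Dop[OF assms] by blast

lemma exp_ad_stable_imp_op_ad_stable:
  assumes W: "rat_subspace W" and stable: "exp_ad p ` Dop (range emb) W \<subseteq> Dop (range emb) W"
    and d: "d \<in> Dop (range emb) W"
  shows "op_ad p d \<in> Dop (range emb) W"
proof -
  from d have "is_diffop d" by (simp add: Dop_range_emb_iff)
  then obtain K where "ord_less d K" by (rule is_diffop_imp_ord_less)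
  then have K: "ord_less d (Suc (Suc K))" by (rule ord_less_mono) simp
  have iter: "(exp_ad p ^^ n) d \<in> Dop (range emb) W" for n
  proof (induction n)
    case (Suc n)
    then show ?case using stable by (simp add: image_subset_iff)
  qed (simp add: d)
  have "poly_act (op_ad p d) r \<in> W" for r
  proof -
    define a where "a s = (ad_map p ^^ s) (poly_act d) r / fact s" for s
    have "(\<Sum>s\<le>Suc K. of_nat n ^ s * a s) \<in> W" for n :: nat
      using iter[of n] poly_act_exp_ad_pow[OF K zero_less_Suc, where p=p and n=n]
      by (simp add: Dop_range_emb_iff exp_ad_map_def a_def lessThan_Suc_atMost times_divide_eq_left)
    then have "a 1 \<in> W" by (rule rat_subspace_coeff_mem[OF W]) simp
    then show ?thesis by (simp add: a_def poly_act_op_ad[OF K])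
  qed
  then show ?thesis
    using ord_less_imp_is_diffop[OF ord_less_op_ad[OF K]] by (simp add: Dop_range_emb_iff)
qed

lemma op_ad_stable_imp_Sset:
  fixes V :: "'k::field_char_0 poly set"
  assumes V: "k_subspace V" and b: "b \<noteq> 0" "Oset b \<subseteq> Sset V"
    and stable: "\<And>d. d \<in> Dop (range emb) (emb ` V) \<Longrightarrow> op_ad p d \<in> Dop (range emb) (emb ` V)"
  shows "p \<in> Sset V"
  unfolding Sset_def
proof (intro CollectI ballI)
  fix v assume v: "v \<in> V"
  define N where "N = degree b"
  define c where "c = fact N * lead_coeff b"
  have ibp_V: "v * ibp_sum b N r \<in> V" for r
    using ibp_sum_in_Oset[of b r] b(2) v by (auto simp: Sset_def N_def mult.commute)
  have "ibp_op v b \<in> Dop (range emb) (emb ` V)"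
    using ibp_V by (simp add: Dop_range_emb_iff poly_act_ibp_op N_def
        ord_less_imp_is_diffop[OF ord_less_ibp_op] del: emb_mult)
  then have "poly_act (op_ad p (ibp_op v b)) 1 \<in> emb ` V"
    using stable by (simp add: Dop_range_emb_iff)
  moreover have "poly_act (op_ad p (ibp_op v b)) 1 = emb (v * ibp_sum b N p - smult c (p * v))"
    by (simp add: poly_act_op_ad[OF ord_less_ibp_op] ad_map_def poly_act_ibp_op ibp_sum_1
        higher_pderiv_degree N_def c_def algebra_simps flip: emb_mult)
  ultimately have "v * ibp_sum b N p - smult c (p * v) \<in> V"
    by (simp only: inj_image_mem_iff[OF inj_emb])
  then have "smult c (p * v) \<in> V"
    using k_subspace_diff[OF V ibp_V[of p]] by fastforce
  then have "smult (inverse c) (smult c (p * v)) \<in> V"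
    using V by (simp add: k_subspace_def del: smult_smult)
  moreover have "c \<noteq> 0" using b(1) by (simp add: c_def)
  ultimately show "p * v \<in> V" by simp
qed

theorem theorem6:
  fixes V :: "'k::field_char_0 poly set" and p :: "'k poly"
  assumes "primary_decomposable V"
  shows "exp_ad p ` Dop (range emb) (emb ` V) = Dop (range emb) (emb ` V) \<longleftrightarrow> p \<in> Sset V"
proof
  from assms obtain b where V: "k_subspace V" and b: "b \<noteq> 0" "Oset b \<subseteq> Sset V"
    by (auto simp: primary_decomposable_def)
  assume "exp_ad p ` Dop (range emb) (emb ` V) = Dop (range emb) (emb ` V)"
  then show "p \<in> Sset V"
    by (intro op_ad_stable_imp_Sset[OF V b] exp_ad_stable_imp_op_ad_stable
        k_subspace_imp_rat_subspace[OF V]) simp_all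
next
  from assms have V: "k_subspace V"
    by (simp add: primary_decomposable_def)
  assume "p \<in> Sset V"
  then have "emb p * x \<in> emb ` V" if "x \<in> emb ` V" for x
    using that by (auto simp: Sset_def simp flip: emb_mult)
  then show "exp_ad p ` Dop (range emb) (emb ` V) = Dop (range emb) (emb ` V)"
    by (rule exp_ad_image_Dop_eq[OF k_subspace_imp_rat_subspace[OF V]])
qed

end
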